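(* Let $V$ and $Q$ be real Hilbert spaces, $f \in V'$, $g \in Q'$, and let $a : V \times V \to \mathbb{R}$ and $b : V \times Q \to \mathbb{R}$ be bilinear forms with $|a(u,v)| \leq \|a\| \|u\|_V \|v\|_V$ and $|b(v,q)| \leq \|b\| \|v\|_V \|q\|_Q$ for all $u,v \in V$, $q \in Q$. Let $B : V \to Q'$ be defined by $\langle Bv, q\rangle_{Q' \times Q} = b(v,q)$ and let $K := \{ v \in V : b(v,q) = 0 \text{ for all } q \in Q\}$. Assume $\operatorname{Range} B = Q'$, and let $\beta > 0$ be a constant with $$\beta \leq \inf_{q \in Q\setminus\{0\}} \sup_{v \in V \setminus\{0\}} \frac{b(v,q)}{\|v\|_V \|q\|_Q}.$$ Assume moreover that $a$ is symmetric, $a(u,v) = a(v,u)$ for all $u,v \in V$, and coercive: there is $\alpha > 0$ with $a(u,u) \geq \alpha\|u\|_V^2$ for all $u \in V$; and let $\alpha_0 \geq \alpha$ be a constant with $a(u,u) \geq \alpha_0 \|u\|_V^2$ for all $u \in K$. Let $(u,p) \in V \times Q$ be the solution of $$a(u,v) + b(v,p) = \langle f, v\rangle_{V' \times V} \ \text{for all } v \in V, \qquad b(u,q) = \langle g, q \rangle_{Q' \times Q} \ \text{for all } q \in Q.$$ Then $$\|u\|_V \leq \frac{1}{\alpha_0}\|f\|_{K'} + \frac{1}{\beta}\Big(\frac{\|a\|}{\alpha}\Big)^{1/2}\|g\|_{Q'},$$ $$\|p\|_Q \leq \frac{1}{\beta}\|f \circ \Pi_{K_a^\perp}\|_{V'}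 + \frac{\|a\|}{\beta^2}\|g\|_{Q'} \leq \frac{1}{\beta}\Big(\frac{\|a\|}{\alpha}\Big)^{1/2}\|f\|_{(K_a^\perp)'} + \frac{\|a\|}{\beta^2}\|g\|_{Q'}.$$
   Context: For $f \in V'$, $\|f\|_{V'} := \sup_{v \in V\setminus\{0\}} |\langle f, v\rangle_{V'\times V}| / \|v\|_V$. For a closed subspace $U \subset V$, $\|f\|_{U'} := \sup_{v \in U \setminus\{0\}} |\langle f, v\rangle_{V' \times V}| / \|v\|_V$ (a semi norm on $V'$ in general). Since $a$ is a scalar product on $V$, define $K_a^\perp := \{ v \in V : a(v, w) = 0 \text{ for all } w \in K\}$; $\Pi_K : V \to K$ is the $a$-orthogonal projection onto $K$ (i.e. $a(\Pi_K v - v, w) = 0$ for all $v \in V$, $w \in K$), and $\Pi_{K_a^\perp} := I - \Pi_K$. $f \circ \Pi_{K_a^\perp} \in V'$ is the functional $v \mapsto \langle f, \Pi_{K_a^\perp} v\rangle_{V' \times V}$. $\|a\|$ denotes a continuity constant of $a$ as in the claim. *)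

theory Defs
  imports "HOL-Analysis.Analysis"
begin

definition dual_seminorm :: "'v::real_normed_vector set \<Rightarrow> ('v \<Rightarrow> real) \<Rightarrow> real" where
  "dual_seminorm U f = Sup (insert 0 ((\<lambda>v. \<bar>f v\<bar> / norm v) ` (U - {0})))"

definition kernel_b :: "('v \<Rightarrow> 'q \<Rightarrow> real) \<Rightarrow> 'v set" where
  "kernel_b b = {v. \<forall>q. b v q = 0}"

definition a_orth :: "('v \<Rightarrow> 'v \<Rightarrow> real) \<Rightarrow> 'v set \<Rightarrow> 'v set" where
  "a_orth a K = {v. \<forall>w\<in>K. a v w = 0}"

definition a_proj :: "('v::real_vector \<Rightarrow> 'v \<Rightarrow> real) \<Rightarrow> 'v set \<Rightarrow> 'v \<Rightarrow> 'v" where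
  "a_proj a K v = (THE w. w \<in> K \<and> (\<forall>z\<in>K. a (w - v) z = 0))"

definition a_proj_perp :: "('v::real_vector \<Rightarrow> 'v \<Rightarrow> real) \<Rightarrow> 'v set \<Rightarrow> 'v \<Rightarrow> 'v" where
  "a_proj_perp a K v = v - a_proj a K v"

end

theory Submission
  imports Defs
begin

(*
  Split the velocity along the a-orthogonal decomposition V = K + K_a^perp, u = u_K + u_perp.
  Testing the first equation with u_K in K kills the pressure and gives
  alpha0 ||u_K||^2 <= ||f||_K' ||u_K||.
  The inf-sup condition yields a lifting w with Bw = g and beta ||w|| <= ||g||; since
  w - u_perp lies in K, the a-orthogonal component u_perp has the least energy among all such
  liftings, so alpha ||u_perp||^2 <= a(w,w) <= ||a|| ||w||^2.
  For the pressure, b(v,p) = f(Pi_perp v) - a(u_perp, v), and the inf-sup condition turns the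
  bound on the right-hand side into a bound on ||p||. The same energy comparison gives
  ||Pi_perp v|| <= (||a||/alpha)^(1/2) ||v||, which is the last inequality.
  Projections and Riesz representatives exist because a is an equivalent inner product on the
  Hilbert space V: they are obtained by minimising the energy over closed subspaces.
*)

lemma bdd_above_dual_seminorm_set:
  assumes "bounded_linear f"
  shows "bdd_above (insert 0 ((\<lambda>v. \<bar>f v\<bar> / norm v) ` (U - {0})))"
  using le_onorm[OF assms] onorm_pos_le[OF assms] by (intro bdd_aboveI[of _ "onorm f"]) auto

lemma dual_seminorm_nonneg: "bounded_linear f \<Longrightarrow> 0 \<le> dual_seminorm U f"
  unfolding dual_seminorm_def by (rule cSup_upper[OF _ bdd_above_dual_seminorm_set]) auto

lemma abs_le_dual_seminorm:
  assumes "bounded_linear f" "x \<in> U"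
  shows "\<bar>f x\<bar> \<le> dual_seminorm U f * norm x"
proof (cases "x = 0")
  case False
  have "\<bar>f x\<bar> / norm x \<le> dual_seminorm U f" unfolding dual_seminorm_def
    by (rule cSup_upper[OF _ bdd_above_dual_seminorm_set[OF assms(1)]]) (use assms False in auto)
  then show ?thesis using False by (simp add: divide_le_eq)
qed (simp add: linear_simps assms(1))

lemma dual_seminorm_subset_zero: "U \<subseteq> {0} \<Longrightarrow> dual_seminorm U f = 0"
  unfolding dual_seminorm_def by (simp add: Diff_eq_empty_iff[THEN iffD2])

locale coercive_form =
  fixes c :: "'v::{real_normed_vector, complete_space} \<Rightarrow> 'v \<Rightarrow> real" and C \<gamma> :: real
  assumes linear_left: "\<And>y. linear (\<lambda>x. c x y)" and linear_right: "\<And>x. linear (c x)"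
    and sym: "\<And>x y. c x y = c y x"
    and bounded: "\<And>x y. \<bar>c x y\<bar> \<le> C * norm x * norm y"
    and coercive: "\<And>x. \<gamma> * (norm x)\<^sup>2 \<le> c x x"
    and coercivity_pos: "0 < \<gamma>"
begin

lemma add_left: "c (x + y) z = c x z + c y z" using linear_add[OF linear_left] .
lemma add_right: "c z (x + y) = c z x + c z y" using linear_add[OF linear_right] .
lemma diff_left: "c (x - y) z = c x z - c y z" using linear_diff[OF linear_left] .
lemma diff_right: "c z (x - y) = c z x - c z y" using linear_diff[OF linear_right] .
lemma scaleR_left: "c (t *\<^sub>R x) z = t * c x z" using linear_scale[OF linear_left] by simp
lemma scaleR_right: "c z (t *\<^sub>R x) = t * c z x" using linear_scale[OF linear_right] by simp
lemma zero_left [simp]: "c 0 z = 0" using linear_0[OF linear_left] .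
lemma zero_right [simp]: "c z 0 = 0" using linear_0[OF linear_right] .

lemmas bilinear_simps = add_left add_right diff_left diff_right scaleR_left scaleR_right

lemma self_nonneg: "0 \<le> c x x"
  by (rule order_trans[OF _ coercive]) (use coercivity_pos in simp)

lemma self_pos: "x \<noteq> 0 \<Longrightarrow> 0 < c x x"
  by (rule less_le_trans[OF _ coercive]) (use coercivity_pos in simp)

lemma self_le_bound: "c x x \<le> C * (norm x)\<^sup>2"
  using bounded[of x x] by (simp add: power2_eq_square mult_ac)

lemma coercivity_le_bound:
  assumes "(x::'v) \<noteq> 0" shows "\<gamma> \<le> C"
proof -
  have "\<gamma> * (norm x)\<^sup>2 \<le> C * (norm x)\<^sup>2"
    using coercive[of x] self_le_bound[of x] by linarith
  then show ?thesis using assms by simp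
qed

lemma bounded_bilinear: "bounded_bilinear c"
proof
  show "\<exists>K. \<forall>x y. norm (c x y) \<le> norm x * norm y * K"
    using bounded by (intro exI[of _ C]) (auto simp: mult_ac)
qed (auto simp: bilinear_simps)

lemma self_add: "c (x + y) (x + y) = c x x + 2 * c x y + c y y"
  by (simp add: bilinear_simps sym[of y x])

lemma self_diff: "c (x - y) (x - y) = c x x - 2 * c x y + c y y"
  by (simp add: bilinear_simps sym[of y x])

lemma Cauchy_Schwarz: "(c x y)\<^sup>2 \<le> c x x * c y y"
proof (cases "y = 0")
  case False
  define t where "t = c x y / c y y"
  have "0 < c y y" using self_pos False .
  have "0 \<le> c (x - t *\<^sub>R y) (x - t *\<^sub>R y)" by (rule self_nonneg)
  also have "\<dots> = c x x - 2 * t * c x y + t * t * c y y"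
    by (simp add: self_diff bilinear_simps sym[of y x] algebra_simps)
  also have "\<dots> = c x x - (c x y)\<^sup>2 / c y y"
    using \<open>0 < c y y\<close> by (simp add: t_def power2_eq_square field_simps)
  finally show ?thesis using \<open>0 < c y y\<close> by (simp add: field_simps)
qed simp

lemma abs_le_sqrt_self: "\<bar>c x y\<bar> \<le> sqrt (c x x) * sqrt (c y y)"
proof -
  have "\<bar>c x y\<bar> \<le> sqrt (c x x * c y y)"
    using Cauchy_Schwarz[of x y] by (intro real_le_rsqrt) simp
  then show ?thesis by (simp add: real_sqrt_mult)
qed

lemma parallelogram: "c (x - y) (x - y) + c (x + y) (x + y) = 2 * c x x + 2 * c y y"
  by (simp add: self_add self_diff)

lemma distance_le_energy_excess:
  assumes M: "subspace M" "x \<in> M" "y \<in> M"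
    and lower: "\<And>z. z \<in> M \<Longrightarrow> d \<le> c (v - z) (v - z)"
  shows "\<gamma> * (norm (x - y))\<^sup>2 \<le> 2 * c (v - x) (v - x) + 2 * c (v - y) (v - y) - 4 * d"
proof -
  define mid where "mid = (1/2) *\<^sub>R (x + y)"
  have "mid \<in> M" unfolding mid_def using M by (simp add: subspace_add subspace_scale)
  have "(v - x) + (v - y) = 2 *\<^sub>R (v - mid)" unfolding mid_def by (simp add: algebra_simps scaleR_2)
  then have "c ((v - x) + (v - y)) ((v - x) + (v - y)) = 4 * c (v - mid) (v - mid)"
    by (simp add: scaleR_left scaleR_right)
  then have "4 * d \<le> c ((v - x) + (v - y)) ((v - x) + (v - y))" using lower[OF \<open>mid \<in> M\<close>] by simp
  moreover have "(v - x) - (v - y) = y - x" by simp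
  ultimately show ?thesis
    using parallelogram[of "v - x" "v - y"] coercive[of "y - x"] by (simp add: norm_minus_commute)
qed

lemma minimizing_sequence_Cauchy:
  assumes M: "subspace M" and ms: "\<And>n. ms n \<in> M"
    and lower: "\<And>z. z \<in> M \<Longrightarrow> d \<le> c (v - z) (v - z)"
    and minimizing: "\<And>n. c (v - ms n) (v - ms n) < d + inverse (real (Suc n))"
  shows "Cauchy ms"
proof -
  have estimate: "\<gamma> * (norm (ms n - ms k))\<^sup>2 < 2 * inverse (real (Suc n)) + 2 * inverse (real (Suc k))"
    for n k
    using distance_le_energy_excess[OF M ms ms lower, of n k] minimizing[of n] minimizing[of k]
    by linarith
  show ?thesis
  proof (rule metric_CauchyI)
    fix e :: real assume "0 < e"
    obtain N :: nat where N: "inverse (real (Suc N)) < \<gamma> * e\<^sup>2 / 4"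
      using reals_Archimedean[of "\<gamma> * e\<^sup>2 / 4"] coercivity_pos \<open>0 < e\<close> by auto
    have "dist (ms m) (ms n) < e" if "N \<le> m" "N \<le> n" for m n
    proof -
      have "inverse (real (Suc m)) \<le> inverse (real (Suc N))"
        "inverse (real (Suc n)) \<le> inverse (real (Suc N))"
        using that by (simp_all add: le_imp_inverse_le)
      then have "\<gamma> * (norm (ms m - ms n))\<^sup>2 < \<gamma> * e\<^sup>2" using estimate[of m n] N by linarith
      then have "(norm (ms m - ms n))\<^sup>2 < e\<^sup>2" using coercivity_pos by simp
      then show ?thesis using \<open>0 < e\<close> by (simp add: dist_norm power_less_imp_less_base)
    qed
    then show "\<exists>N. \<forall>m\<ge>N. \<forall>n\<ge>N. dist (ms m) (ms n) < e" by blast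
  qed
qed

lemma minimizer_exists:
  assumes M: "subspace M" "closed M"
  obtains m where "m \<in> M" "\<And>z. z \<in> M \<Longrightarrow> c (v - m) (v - m) \<le> c (v - z) (v - z)"
proof -
  define E where "E = (\<lambda>z. c (v - z) (v - z))"
  define d where "d = Inf (E ` M)"
  have "0 \<in> M" using M subspace_0 by blast
  have "bdd_below (E ` M)" unfolding E_def using self_nonneg by (auto intro!: bdd_belowI)
  then have lower: "d \<le> E z" if "z \<in> M" for z unfolding d_def using that by (intro cInf_lower) auto
  have "\<exists>m\<in>M. E m < d + inverse (real (Suc n))" for n
  proof -
    have "Inf (E ` M) < d + inverse (real (Suc n))" unfolding d_def by simp
    then show ?thesis using cInf_lessD[of "E ` M"] \<open>0 \<in> M\<close> by blast
  qed
  then obtain ms where ms: "\<And>n. ms n \<in> M" "\<And>n. E (ms n) < d + inverse (real (Suc n))"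
    by metis
  have "Cauchy ms"
    by (rule minimizing_sequence_Cauchy[OF M(1) ms(1)]) (use lower ms(2) in \<open>auto simp: E_def\<close>)
  then obtain m where lim: "ms \<longlonglongrightarrow> m" using Cauchy_convergent_iff convergent_def by blast
  have "m \<in> M" using closed_sequentially[OF M(2) ms(1) lim] .
  have "(\<lambda>n. E (ms n)) \<longlonglongrightarrow> E m" unfolding E_def
    by (intro bounded_bilinear.tendsto[OF bounded_bilinear] tendsto_diff tendsto_const lim)
  moreover have "(\<lambda>n. d + inverse (real (Suc n))) \<longlonglongrightarrow> d + 0"
    by (intro tendsto_add tendsto_const LIMSEQ_inverse_real_of_nat)
  ultimately have "E m \<le> d + 0" by (rule LIMSEQ_le) (use ms(2) in \<open>auto intro: less_imp_le\<close>)
  then have "E m \<le> E z" if "z \<in> M" for z using lower[OF that] by simp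
  then show ?thesis using that[OF \<open>m \<in> M\<close>] unfolding E_def by blast
qed

lemma minimizer_orthogonal:
  assumes M: "subspace M" and "m \<in> M" "z \<in> M"
    and minimal: "\<And>z. z \<in> M \<Longrightarrow> c (v - m) (v - m) \<le> c (v - z) (v - z)"
  shows "c (m - v) z = 0"
proof (cases "z = 0")
  case False
  define e where "e = c (v - m) z"
  define t where "t = e / c z z"
  have "0 < c z z" using self_pos False .
  have "m + t *\<^sub>R z \<in> M" using M \<open>m \<in> M\<close> \<open>z \<in> M\<close> by (simp add: subspace_add subspace_scale)
  then have "c (v - m) (v - m) \<le> c ((v - m) - t *\<^sub>R z) ((v - m) - t *\<^sub>R z)"
    using minimal by (simp add: algebra_simps)
  also have "\<dots> = c (v - m) (v - m) - 2 * t * e + t * t * c z z"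
    unfolding e_def by (simp only: self_diff scaleR_left scaleR_right)
  finally have "e * e \<le> 0"
    using \<open>0 < c z z\<close> by (simp add: t_def field_simps)
  then have "e = 0" by (metis mult_le_0_iff order_antisym)
  then show ?thesis unfolding e_def by (simp add: diff_left)
qed simp

lemma projection_exists:
  assumes "subspace M" "closed M"
  shows "\<exists>w\<in>M. \<forall>z\<in>M. c (w - v) z = 0"
  using minimizer_exists[OF assms, of v] minimizer_orthogonal[OF assms(1)] by metis

lemma riesz_representation:
  assumes "bounded_linear \<phi>"
  shows "\<exists>y. \<forall>x. c x y = \<phi> x"
proof (cases "\<forall>x. \<phi> x = 0")
  case False
  then obtain x where "\<phi> x \<noteq> 0" by blast
  interpret \<phi>: bounded_linear \<phi> by fact
  define N where "N = {v. \<phi> v = 0}"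
  have "subspace N" unfolding N_def by (auto simp: subspace_def \<phi>.add \<phi>.scaleR)
  moreover have "closed N" unfolding N_def
    by (intro closed_Collect_eq continuous_on_const \<phi>.continuous_on continuous_on_id)
  ultimately obtain w where "w \<in> N" and w: "\<And>z. z \<in> N \<Longrightarrow> c (w - x) z = 0"
    using projection_exists[of N x] by blast
  define y where "y = x - w"
  have "\<phi> y = \<phi> x" using \<open>w \<in> N\<close> unfolding y_def N_def by (simp add: \<phi>.diff)
  then have "y \<noteq> 0" using \<open>\<phi> x \<noteq> 0\<close> by auto
  \<comment> \<open>y spans the c-orthogonal complement of the null space of \<phi>\<close>
  have orth: "c z y = 0" if "z \<in> N" for z
    using w[OF that] unfolding y_def by (simp add: diff_left sym[of z])
  have "c v ((\<phi> y / c y y) *\<^sub>R y) = \<phi> v" for v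
  proof -
    have "v - (\<phi> v / \<phi> y) *\<^sub>R y \<in> N"
      unfolding N_def using \<open>\<phi> y = \<phi> x\<close> \<open>\<phi> x \<noteq> 0\<close> by (simp add: \<phi>.diff \<phi>.scaleR)
    then have "c (v - (\<phi> v / \<phi> y) *\<^sub>R y) y = 0" by (rule orth)
    then have "c v y = (\<phi> v / \<phi> y) * c y y" by (simp add: bilinear_simps)
    then show ?thesis
      using self_pos[OF \<open>y \<noteq> 0\<close>] \<open>\<phi> y = \<phi> x\<close> \<open>\<phi> x \<noteq> 0\<close> by (simp add: scaleR_right field_simps)
  qed
  then show ?thesis by blast
qed (intro exI[of _ 0]; simp)

lemma abs_le_of_self_le:
  assumes "c x x \<le> c w w" "0 \<le> C"
  shows "\<bar>c x y\<bar> \<le> C * norm w * norm y"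
proof -
  have sqrt_bound: "sqrt (c z z) \<le> sqrt C * norm z" for z
  proof -
    have "sqrt (c z z) \<le> sqrt (C * (norm z)\<^sup>2)" using self_le_bound[of z] by simp
    also have "\<dots> = sqrt C * norm z" by (simp only: real_sqrt_mult real_sqrt_abs abs_norm_cancel)
    finally show ?thesis .
  qed
  have "sqrt (c x x) \<le> sqrt C * norm w"
    using assms(1) sqrt_bound[of w] real_sqrt_le_mono[OF assms(1)] by linarith
  then have "sqrt (c x x) * sqrt (c y y) \<le> (sqrt C * norm w) * (sqrt C * norm y)"
    using sqrt_bound[of y] by (intro mult_mono) (simp_all add: self_nonneg assms(2))
  also have "\<dots> = C * norm w * norm y" using assms(2) by (simp add: mult_ac)
  finally show ?thesis using abs_le_sqrt_self[of x y] by linarith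
qed

lemma self_le_add_orth:
  assumes "x \<in> a_orth c M" "z \<in> M"
  shows "c x x \<le> c (x + z) (x + z)"
  using assms self_nonneg[of z] by (simp add: self_add a_orth_def)

lemma norm_le_of_self_le:
  assumes "c x x \<le> c y y"
  shows "norm x \<le> sqrt (C / \<gamma>) * norm y"
proof -
  have "\<gamma> * (norm x)\<^sup>2 \<le> C * (norm y)\<^sup>2"
    using coercive[of x] assms self_le_bound[of y] by linarith
  then have "(norm x)\<^sup>2 \<le> C / \<gamma> * (norm y)\<^sup>2"
    using coercivity_pos by (simp add: field_simps)
  then have "norm x \<le> sqrt (C / \<gamma> * (norm y)\<^sup>2)" by (rule real_le_rsqrt)
  also have "\<dots> = sqrt (C / \<gamma>) * norm y" by (simp only: real_sqrt_mult real_sqrt_abs abs_norm_cancel)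
  finally show ?thesis .
qed

context
  fixes M :: "'v set" assumes M: "subspace M" "closed M"
begin

lemma a_proj_unique:
  assumes "w \<in> M" "w' \<in> M" "\<forall>z\<in>M. c (w - v) z = 0" "\<forall>z\<in>M. c (w' - v) z = 0"
  shows "w = w'"
proof -
  have "w - w' \<in> M" using M(1) assms by (simp add: subspace_diff)
  then have "c (w - w') (w - w') = 0" using assms by (simp add: diff_left)
  then show ?thesis using self_pos[of "w - w'"] by auto
qed

lemma a_proj: "a_proj c M v \<in> M \<and> (\<forall>z\<in>M. c (a_proj c M v - v) z = 0)"
proof -
  have "\<exists>!w. w \<in> M \<and> (\<forall>z\<in>M. c (w - v) z = 0)"
    using projection_exists[OF M, of v] a_proj_unique by blast
  then show ?thesis unfolding a_proj_def by (rule theI')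
qed

lemma a_proj_mem: "a_proj c M v \<in> M"
  using a_proj by blast

lemma a_proj_orthogonal: "z \<in> M \<Longrightarrow> c (a_proj c M v - v) z = 0"
  using a_proj by blast

lemma a_proj_eqI: "w \<in> M \<Longrightarrow> (\<And>z. z \<in> M \<Longrightarrow> c (w - v) z = 0) \<Longrightarrow> a_proj c M v = w"
  using a_proj_unique[of "a_proj c M v" w v] a_proj by blast

lemma linear_a_proj: "linear (a_proj c M)"
proof
  show "a_proj c M (x + y) = a_proj c M x + a_proj c M y" for x y
  proof (rule a_proj_eqI)
    show "a_proj c M x + a_proj c M y \<in> M" using M(1) a_proj_mem by (simp add: subspace_add)
    have split: "a_proj c M x + a_proj c M y - (x + y) = (a_proj c M x - x) + (a_proj c M y - y)"
      by (simp add: algebra_simps)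
    show "c (a_proj c M x + a_proj c M y - (x + y)) z = 0" if "z \<in> M" for z
      unfolding split using a_proj_orthogonal[OF that] by (simp add: add_left)
  qed
  show "a_proj c M (t *\<^sub>R x) = t *\<^sub>R a_proj c M x" for t x
  proof (rule a_proj_eqI)
    show "t *\<^sub>R a_proj c M x \<in> M" using M(1) a_proj_mem by (simp add: subspace_scale)
    show "c (t *\<^sub>R a_proj c M x - t *\<^sub>R x) z = 0" if "z \<in> M" for z
      using a_proj_orthogonal[OF that] by (simp add: scaleR_left flip: scaleR_diff_right)
  qed
qed

lemma a_proj_perp_mem_a_orth: "a_proj_perp c M v \<in> a_orth c M"
  using a_proj_orthogonal unfolding a_orth_def a_proj_perp_def by (simp add: diff_left)

lemma a_proj_perp_self_adjoint: "c x (a_proj_perp c M y) = c (a_proj_perp c M x) y"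
proof -
  have orth: "c (a_proj_perp c M v) (a_proj c M w) = 0" for v w
    using a_proj_perp_mem_a_orth a_proj_mem unfolding a_orth_def by blast
  have "c x (a_proj_perp c M y) = c (a_proj_perp c M x) (a_proj_perp c M y)"
    using orth[of y x] by (simp add: a_proj_perp_def diff_left sym[of "a_proj c M x"])
  also have "\<dots> = c (a_proj_perp c M x) y"
    using orth[of x y] by (simp add: a_proj_perp_def diff_right)
  finally show ?thesis .
qed

lemma norm_a_proj_perp_le: "norm (a_proj_perp c M v) \<le> sqrt (C / \<gamma>) * norm v"
proof (rule norm_le_of_self_le)
  have "v = a_proj_perp c M v + a_proj c M v" by (simp add: a_proj_perp_def)
  then show "c (a_proj_perp c M v) (a_proj_perp c M v) \<le> c v v"
    using self_le_add_orth[OF a_proj_perp_mem_a_orth a_proj_mem] by metis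
qed

lemma bounded_linear_a_proj_perp: "bounded_linear (a_proj_perp c M)"
proof -
  have "linear (a_proj_perp c M)"
    unfolding a_proj_perp_def by (intro linear_compose_sub bounded_linear.linear[OF bounded_linear_ident] linear_a_proj)
  then show ?thesis
    unfolding bounded_linear_def bounded_linear_axioms_def
    using norm_a_proj_perp_le by (metis mult.commute)
qed

lemma onorm_comp_a_proj_perp_le:
  assumes "bounded_linear f" "0 \<le> C"
  shows "onorm (\<lambda>v. f (a_proj_perp c M v)) \<le> sqrt (C / \<gamma>) * dual_seminorm (a_orth c M) f"
proof (rule onorm_bound)
  show "0 \<le> sqrt (C / \<gamma>) * dual_seminorm (a_orth c M) f"
    using assms coercivity_pos by (simp add: dual_seminorm_nonneg)
  fix v
  have "norm (f (a_proj_perp c M v)) \<le> dual_seminorm (a_orth c M) f * norm (a_proj_perp c M v)"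
    using abs_le_dual_seminorm[OF assms(1) a_proj_perp_mem_a_orth] by simp
  also have "\<dots> \<le> dual_seminorm (a_orth c M) f * (sqrt (C / \<gamma>) * norm v)"
    by (intro mult_left_mono norm_a_proj_perp_le dual_seminorm_nonneg assms(1))
  finally show "norm (f (a_proj_perp c M v)) \<le> sqrt (C / \<gamma>) * dual_seminorm (a_orth c M) f * norm v"
    by (simp add: mult_ac)
qed

end

end

lemma mem_kernel_b: "v \<in> kernel_b b \<longleftrightarrow> (\<forall>q. b v q = 0)"
  by (simp add: kernel_b_def)

lemma coercive_form_inner: "coercive_form (inner :: 'a::{real_inner, complete_space} \<Rightarrow> 'a \<Rightarrow> real) 1 1"
  by unfold_locales
    (auto intro: bounded_linear.linear[OF bounded_linear_inner_left]
      bounded_linear.linear[OF bounded_linear_inner_right]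
      simp: Cauchy_Schwarz_ineq2 power2_norm_eq_inner inner_commute inner_add_left inner_add_right)

locale mixed_problem = coercive_form a na \<alpha>
  for a :: "'v::{real_inner, complete_space} \<Rightarrow> 'v \<Rightarrow> real" and na \<alpha> :: real +
  fixes b :: "'v \<Rightarrow> 'q::{real_inner, complete_space} \<Rightarrow> real" and nb \<beta> :: real
  assumes b_linear_left: "\<And>q. linear (\<lambda>v. b v q)" and b_linear_right: "\<And>v. linear (b v)"
    and b_bounded: "\<And>v q. \<bar>b v q\<bar> \<le> nb * norm v * norm q"
    and inf_sup: "\<And>q. q \<noteq> 0 \<Longrightarrow> \<beta> \<le> (SUP v\<in>UNIV - {0}. b v q / (norm v * norm q))"
    and inf_sup_pos: "0 < \<beta>"
    and nontrivial: "\<exists>v::'v. v \<noteq> 0"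
begin

lemma coercivity_le_norm_a: "\<alpha> \<le> na"
  using nontrivial coercivity_le_bound by blast

lemma bounded_linear_b_left: "bounded_linear (\<lambda>v. b v q)"
proof -
  have "norm (b v q) \<le> norm v * (\<bar>nb\<bar> * norm q)" for v
    using b_bounded[of v q] abs_ge_self[of nb] mult_right_mono[of nb "\<bar>nb\<bar>" "norm v * norm q"]
    by (simp add: mult_ac)
  then show ?thesis unfolding bounded_linear_def bounded_linear_axioms_def
    using b_linear_left by blast
qed

lemma subspace_kernel_b: "subspace (kernel_b b)"
  unfolding kernel_b_def subspace_def
  by (simp add: linear_0[OF b_linear_left] linear_add[OF b_linear_left] linear_scale[OF b_linear_left])

lemma closed_kernel_b: "closed (kernel_b b)"
proof -
  have "kernel_b b = (\<Inter>q. {v. b v q = 0})" unfolding kernel_b_def by auto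
  moreover have "closed {v. b v q = 0}" for q
    using bounded_linear_b_left[of q]
    by (intro closed_Collect_eq continuous_on_const linear_continuous_on)
  ultimately show ?thesis by auto
qed

lemma inf_sup_bound:
  assumes "0 \<le> B" "\<And>v. b v q \<le> B * norm v"
  shows "\<beta> * norm q \<le> B"
proof (cases "q = 0")
  case False
  have "\<beta> \<le> (SUP v\<in>UNIV - {0}. b v q / (norm v * norm q))" by (rule inf_sup[OF False])
  also have "\<dots> \<le> B / norm q"
  proof (rule cSUP_least)
    show "UNIV - {0::'v} \<noteq> {}" using nontrivial by blast
    show "b v q / (norm v * norm q) \<le> B / norm q" if "v \<in> UNIV - {0}" for v
      using that assms(2)[of v] False by (simp add: divide_le_eq field_simps)
  qed
  finally show ?thesis using False by (simp add: pos_le_divide_eq mult.commute)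
qed (simp add: assms(1))

definition b_rep :: "'q \<Rightarrow> 'v" where
  "b_rep q = (SOME y. \<forall>v. inner v y = b v q)"

lemma inner_b_rep: "inner v (b_rep q) = b v q"
proof -
  have "\<exists>y. \<forall>v. inner v y = b v q"
    using coercive_form.riesz_representation[OF coercive_form_inner bounded_linear_b_left] .
  then show ?thesis unfolding b_rep_def by (rule someI_ex[where P = "\<lambda>y. \<forall>v. inner v y = b v q", THEN spec])
qed

lemma linear_b_rep: "linear b_rep"
  by (rule linearI; rule vector_eq_ldot[THEN iffD1])
    (simp_all add: inner_b_rep inner_add_right linear_add[OF b_linear_right] linear_scale[OF b_linear_right])

lemma norm_b_rep_le: "norm (b_rep q) \<le> \<bar>nb\<bar> * norm q"
proof -
  have "(norm (b_rep q))\<^sup>2 = b (b_rep q) q" by (simp add: power2_norm_eq_inner inner_b_rep)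
  also have "\<dots> \<le> norm (b_rep q) * (\<bar>nb\<bar> * norm q)"
    using b_bounded[of "b_rep q" q] abs_ge_self[of nb] mult_right_mono[of nb "\<bar>nb\<bar>" "norm (b_rep q) * norm q"]
    by (simp add: mult_ac)
  finally show ?thesis by (cases "b_rep q = 0") (simp_all add: power2_eq_square mult_le_cancel_left)
qed

lemma norm_b_rep_ge: "\<beta> * norm q \<le> norm (b_rep q)"
proof (rule inf_sup_bound)
  show "b v q \<le> norm (b_rep q) * norm v" for v
    using norm_cauchy_schwarz[of v "b_rep q"] by (simp add: inner_b_rep mult.commute)
qed simp


lemma coercive_form_b_rep: "coercive_form (\<lambda>q r. inner (b_rep q) (b_rep r)) (nb\<^sup>2) (\<beta>\<^sup>2)"
proof (rule coercive_form.intro)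
  show "linear (\<lambda>q. inner (b_rep q) (b_rep r))" for r
    by (rule linearI) (simp_all add: linear_add[OF linear_b_rep] linear_scale[OF linear_b_rep] inner_add_left)
  show "linear (\<lambda>r. inner (b_rep q) (b_rep r))" for q
    by (rule linearI) (simp_all add: linear_add[OF linear_b_rep] linear_scale[OF linear_b_rep] inner_add_right)
  show "inner (b_rep q) (b_rep r) = inner (b_rep r) (b_rep q)" for q r by (rule inner_commute)
  show "\<bar>inner (b_rep q) (b_rep r)\<bar> \<le> nb\<^sup>2 * norm q * norm r" for q r
  proof -
    have "\<bar>inner (b_rep q) (b_rep r)\<bar> \<le> norm (b_rep q) * norm (b_rep r)" by (rule Cauchy_Schwarz_ineq2)
    also have "\<dots> \<le> (\<bar>nb\<bar> * norm q) * (\<bar>nb\<bar> * norm r)"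
      by (intro mult_mono norm_b_rep_le) simp_all
    finally show ?thesis by (simp add: power2_eq_square mult_ac)
  qed
  show "\<beta>\<^sup>2 * (norm q)\<^sup>2 \<le> inner (b_rep q) (b_rep q)" for q
  proof -
    have "(\<beta> * norm q)\<^sup>2 \<le> (norm (b_rep q))\<^sup>2"
      by (rule power_mono[OF norm_b_rep_ge]) (use inf_sup_pos in simp)
    then show ?thesis by (simp add: power_mult_distrib power2_norm_eq_inner)
  qed
  show "0 < \<beta>\<^sup>2" using inf_sup_pos by simp
qed

lemma lifting_exists:
  assumes "bounded_linear g"
  obtains w where "\<And>q. b w q = g q" "\<beta> * norm w \<le> onorm g"
proof -
  \<comment> \<open>w is sought in the range of b_rep, where the inf-sup condition makes the problem coercive\<close>
  obtain q0 where q0: "\<And>q. inner (b_rep q) (b_rep q0) = g q"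
    using coercive_form.riesz_representation[OF coercive_form_b_rep assms] by blast
  define w where "w = b_rep q0"
  have "b w q = g q" for q
    using q0[of q] inner_b_rep[of w q] unfolding w_def by (simp add: inner_commute)
  moreover have "\<beta> * norm w \<le> onorm g"
  proof (cases "w = 0")
    case False
    have "\<beta> * (norm w)\<^sup>2 = \<beta> * g q0" using q0[of q0] by (simp add: w_def power2_norm_eq_inner)
    also have "\<dots> \<le> \<beta> * (onorm g * norm q0)"
      using onorm[OF assms, of q0] inf_sup_pos by (intro mult_left_mono) simp_all
    also have "\<dots> = onorm g * (\<beta> * norm q0)" by (simp add: mult_ac)
    also have "\<dots> \<le> onorm g * norm w"
      unfolding w_def by (intro mult_left_mono norm_b_rep_ge onorm_pos_le assms)
    finally have "\<beta> * norm w * norm w \<le> onorm g * norm w" by (simp add: power2_eq_square mult_ac)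
    then show ?thesis by (rule mult_right_le_imp_le) (use False in simp)
  qed (simp add: onorm_pos_le[OF assms])
  ultimately show ?thesis using that by blast
qed

end


locale mixed_solution = mixed_problem a na \<alpha> b nb \<beta>
  for a :: "'v::{real_inner, complete_space} \<Rightarrow> 'v \<Rightarrow> real" and na \<alpha> :: real
    and b :: "'v \<Rightarrow> 'q::{real_inner, complete_space} \<Rightarrow> real" and nb \<beta> :: real +
  fixes f :: "'v \<Rightarrow> real" and g :: "'q \<Rightarrow> real" and u :: 'v and p :: 'q and \<alpha>0 :: real
  assumes f_bounded_linear: "bounded_linear f" and g_bounded_linear: "bounded_linear g"
    and kernel_coercive: "\<And>v. v \<in> kernel_b b \<Longrightarrow> \<alpha>0 * (norm v)\<^sup>2 \<le> a v v"
    and kernel_coercivity_pos: "0 < \<alpha>0"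
    and first_equation: "\<And>v. a u v + b v p = f v"
    and second_equation: "\<And>q. b u q = g q"
begin

lemmas kernel_projection =
  a_proj_mem[OF subspace_kernel_b closed_kernel_b]
  a_proj_orthogonal[OF subspace_kernel_b closed_kernel_b]
  a_proj_perp_mem_a_orth[OF subspace_kernel_b closed_kernel_b]
  a_proj_perp_self_adjoint[OF subspace_kernel_b closed_kernel_b]

lemma b_a_proj_perp_left: "b (a_proj_perp a (kernel_b b) v) q = b v q"
  using mem_kernel_b[THEN iffD1, rule_format, OF kernel_projection(1)] by (simp add: a_proj_perp_def linear_diff[OF b_linear_left])

lemma energy_u_perp_le_lifting:
  obtains w where "\<beta> * norm w \<le> onorm g"
    "a (a_proj_perp a (kernel_b b) u) (a_proj_perp a (kernel_b b) u) \<le> a w w"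
proof -
  obtain w where w: "\<And>q. b w q = g q" "\<beta> * norm w \<le> onorm g"
    using lifting_exists[OF g_bounded_linear] by blast
  have "w - a_proj_perp a (kernel_b b) u \<in> kernel_b b"
    by (simp add: mem_kernel_b linear_diff[OF b_linear_left] b_a_proj_perp_left w(1) second_equation)
  from self_le_add_orth[OF kernel_projection(3)[of u] this] w(2) show ?thesis
    by (intro that) simp_all
qed

lemma norm_u_perp_le: "norm (a_proj_perp a (kernel_b b) u) \<le> sqrt (na / \<alpha>) / \<beta> * onorm g"
proof -
  obtain w where w: "\<beta> * norm w \<le> onorm g"
    "a (a_proj_perp a (kernel_b b) u) (a_proj_perp a (kernel_b b) u) \<le> a w w"
    by (rule energy_u_perp_le_lifting)
  have "norm (a_proj_perp a (kernel_b b) u) \<le> sqrt (na / \<alpha>) * norm w"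
    by (rule norm_le_of_self_le[OF w(2)])
  also have "\<dots> \<le> sqrt (na / \<alpha>) * (onorm g / \<beta>)"
    using w(1) inf_sup_pos coercivity_pos coercivity_le_norm_a
    by (intro mult_left_mono) (simp_all add: pos_le_divide_eq mult.commute)
  finally show ?thesis by simp
qed

lemma norm_u_kernel_le: "norm (a_proj a (kernel_b b) u) \<le> dual_seminorm (kernel_b b) f / \<alpha>0"
proof -
  define x where "x = a_proj a (kernel_b b) u"
  have "x \<in> kernel_b b" unfolding x_def by (rule kernel_projection(1))
  have "\<alpha>0 * (norm x)\<^sup>2 \<le> a x x" using kernel_coercive[OF \<open>x \<in> kernel_b b\<close>] .
  also have "a x x = a u x"
    using kernel_projection(2)[OF \<open>x \<in> kernel_b b\<close>, of u] by (simp add: x_def diff_left)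
  also have "\<dots> = f x" using first_equation[of x] mem_kernel_b[THEN iffD1, rule_format, OF \<open>x \<in> kernel_b b\<close>] by simp
  also have "\<dots> \<le> dual_seminorm (kernel_b b) f * norm x"
    using abs_le_dual_seminorm[OF f_bounded_linear \<open>x \<in> kernel_b b\<close>] by linarith
  finally have "\<alpha>0 * norm x * norm x \<le> dual_seminorm (kernel_b b) f * norm x"
    by (simp add: power2_eq_square mult_ac)
  then have "\<alpha>0 * norm x \<le> dual_seminorm (kernel_b b) f"
    using dual_seminorm_nonneg[OF f_bounded_linear]
    by (cases "x = 0") (auto dest: mult_right_le_imp_le)
  then show ?thesis using kernel_coercivity_pos by (simp add: x_def pos_le_divide_eq mult.commute)
qed

lemma norm_u_le: "norm u \<le> dual_seminorm (kernel_b b) f / \<alpha>0 + sqrt (na / \<alpha>) / \<beta> * onorm g"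
proof -
  have "norm u \<le> norm (a_proj a (kernel_b b) u) + norm (a_proj_perp a (kernel_b b) u)"
    using norm_triangle_ineq[of "a_proj a (kernel_b b) u" "a_proj_perp a (kernel_b b) u"]
    by (simp add: a_proj_perp_def)
  then show ?thesis using norm_u_kernel_le norm_u_perp_le by linarith
qed

lemma pressure_equation: "b v p = f (a_proj_perp a (kernel_b b) v) - a (a_proj_perp a (kernel_b b) u) v"
proof -
  have "b v p = b (a_proj_perp a (kernel_b b) v) p" by (rule b_a_proj_perp_left[symmetric])
  also have "\<dots> = f (a_proj_perp a (kernel_b b) v) - a u (a_proj_perp a (kernel_b b) v)"
    using first_equation[of "a_proj_perp a (kernel_b b) v"] by simp
  finally show ?thesis by (simp add: kernel_projection(4))
qed

lemma norm_p_le: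
  "norm p \<le> onorm (\<lambda>v. f (a_proj_perp a (kernel_b b) v)) / \<beta> + na / \<beta>\<^sup>2 * onorm g"
proof -
  define F where "F = onorm (\<lambda>v. f (a_proj_perp a (kernel_b b) v))"
  obtain w where w: "\<beta> * norm w \<le> onorm g"
    "a (a_proj_perp a (kernel_b b) u) (a_proj_perp a (kernel_b b) u) \<le> a w w"
    by (rule energy_u_perp_le_lifting)
  have "0 \<le> na" using coercivity_pos coercivity_le_norm_a by linarith
  have f_perp: "bounded_linear (\<lambda>v. f (a_proj_perp a (kernel_b b) v))"
    using bounded_linear_compose[OF f_bounded_linear
        bounded_linear_a_proj_perp[OF subspace_kernel_b closed_kernel_b]] .
  have "b v p \<le> (F + na * norm w) * norm v" for v
  proof -
    have "\<bar>f (a_proj_perp a (kernel_b b) v)\<bar> \<le> F * norm v"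
      using onorm[OF f_perp, of v] by (simp add: F_def)
    moreover have "\<bar>a (a_proj_perp a (kernel_b b) u) v\<bar> \<le> na * norm w * norm v"
      by (rule abs_le_of_self_le[OF w(2) \<open>0 \<le> na\<close>])
    ultimately show ?thesis unfolding pressure_equation by (simp add: algebra_simps abs_le_iff)
  qed
  then have "\<beta> * norm p \<le> F + na * norm w"
    using onorm_pos_le[OF f_perp] \<open>0 \<le> na\<close> by (intro inf_sup_bound) (simp_all add: F_def)
  also have "\<dots> \<le> F + na * (onorm g / \<beta>)"
    using mult_left_mono[OF w(1) \<open>0 \<le> na\<close>] inf_sup_pos by (simp add: pos_le_divide_eq mult_ac)
  finally show ?thesis
    using inf_sup_pos by (simp add: F_def pos_le_divide_eq power2_eq_square field_simps)
qed

end


lemma trivial_if_surjective_from_trivial: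
  fixes b :: "'v::real_vector \<Rightarrow> 'q::real_inner \<Rightarrow> real"
  assumes "\<And>h. bounded_linear h \<Longrightarrow> \<exists>v. \<forall>q. b v q = h q" "\<And>q. linear (\<lambda>v. b v q)"
    and "\<And>v::'v. v = 0"
  shows "(q::'q) = 0"
proof -
  obtain v where "\<forall>r. b v r = inner q r" using assms(1)[OF bounded_linear_inner_right] by blast
  then have "inner q q = b 0 q" using assms(3)[of v] by simp
  then show ?thesis using linear_0[OF assms(2)] by simp
qed

theorem theorem2p4:
  fixes a :: "'v::{real_inner, complete_space} \<Rightarrow> 'v \<Rightarrow> real"
    and b :: "'v \<Rightarrow> 'q::{real_inner, complete_space} \<Rightarrow> real"
    and f :: "'v \<Rightarrow> real" and g :: "'q \<Rightarrow> real"
    and na nb \<alpha> \<alpha>0 \<beta> :: real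
    and u :: 'v and p :: 'q
  assumes f_lin: "bounded_linear f" and g_lin: "bounded_linear g"
    and a_lin1: "\<And>v. linear (\<lambda>u. a u v)" and a_lin2: "\<And>u. linear (a u)"
    and b_lin1: "\<And>q. linear (\<lambda>v. b v q)" and b_lin2: "\<And>v. linear (b v)"
    and a_bnd: "\<And>u v. \<bar>a u v\<bar> \<le> na * norm u * norm v"
    and b_bnd: "\<And>v q. \<bar>b v q\<bar> \<le> nb * norm v * norm q"
    and B_surj: "\<And>h. bounded_linear h \<Longrightarrow> \<exists>v. \<forall>q. b v q = h q"
    and beta_pos: "\<beta> > 0"
    and inf_sup: "\<And>q. q \<noteq> 0 \<Longrightarrow>
                    \<beta> \<le> (SUP v\<in>UNIV - {0}. b v q / (norm v * norm q))"
    and a_sym: "\<And>u v. a u v = a v u"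
    and alpha_pos: "\<alpha> > 0"
    and a_coerc: "\<And>u. a u u \<ge> \<alpha> * (norm u)\<^sup>2"
    and alpha0_ge: "\<alpha>0 \<ge> \<alpha>"
    and a_coerc_K: "\<And>u. u \<in> kernel_b b \<Longrightarrow> a u u \<ge> \<alpha>0 * (norm u)\<^sup>2"
    and eq1: "\<And>v. a u v + b v p = f v"
    and eq2: "\<And>q. b u q = g q"
  shows "norm u \<le> dual_seminorm (kernel_b b) f / \<alpha>0
                    + sqrt (na / \<alpha>) / \<beta> * onorm g
    \<and> norm p \<le> onorm (\<lambda>v. f (a_proj_perp a (kernel_b b) v)) / \<beta>
                    + na / \<beta>\<^sup>2 * onorm g
    \<and> onorm (\<lambda>v. f (a_proj_perp a (kernel_b b) v)) / \<beta> + na / \<beta>\<^sup>2 * onorm g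
           \<le> sqrt (na / \<alpha>) / \<beta> * dual_seminorm (a_orth a (kernel_b b)) f
             + na / \<beta>\<^sup>2 * onorm g"
proof (cases "\<exists>v::'v. v \<noteq> 0")
  case True
  interpret mixed_solution a na \<alpha> b nb \<beta> f g u p \<alpha>0
  proof (intro mixed_solution.intro mixed_problem.intro mixed_problem_axioms.intro
      mixed_solution_axioms.intro coercive_form.intro)
    show "0 < \<alpha>0" using alpha_pos alpha0_ge by linarith
  qed (fact assms True)+
  have "0 \<le> na" using coercivity_pos coercivity_le_norm_a by linarith
  have "onorm (\<lambda>v. f (a_proj_perp a (kernel_b b) v)) / \<beta>
      \<le> sqrt (na / \<alpha>) * dual_seminorm (a_orth a (kernel_b b)) f / \<beta>"
    by (rule divide_right_mono[OF onorm_comp_a_proj_perp_le[OF subspace_kernel_b closed_kernel_b f_lin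
          \<open>0 \<le> na\<close>]]) (use beta_pos in simp)
  then show ?thesis by (intro conjI norm_u_le norm_p_le add_right_mono) simp
next
  case False
  \<comment> \<open>V = {0}: the inf-sup supremum is over the empty set, but surjectivity of B forces Q = {0}\<close>
  then have V0: "\<And>v::'v. v = 0" by blast
  have Q0: "\<And>q::'q. q = 0" by (rule trivial_if_surjective_from_trivial[OF B_surj b_lin1 V0])
  have "g = (\<lambda>_. 0)" using linear_0[OF bounded_linear.linear[OF g_lin]] Q0 by metis
  moreover have "(\<lambda>v. f (a_proj_perp a (kernel_b b) v)) = (\<lambda>_. 0)"
    using linear_0[OF bounded_linear.linear[OF f_lin]] V0 by metis
  moreover have "dual_seminorm (a_orth a (kernel_b b)) f = 0"
    using V0 by (intro dual_seminorm_subset_zero) blast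
  moreover have "0 \<le> dual_seminorm (kernel_b b) f / \<alpha>0"
    using dual_seminorm_nonneg[OF f_lin] alpha_pos alpha0_ge by simp
  ultimately show ?thesis using V0[of u] Q0[of p] by (simp add: onorm_zero)
qed

end
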